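(* Let $C\subseteq\mathbb{F}_q^{2n}$ be a symplectic self-orthogonal $\mathbb F_q$-linear code with stabilizer code $Q(C)$, and let $\emptyset\neq I\subsetneq J\subseteq\{1,\dots,n\}$. If $|J|\geq n-\mathrm{swt}(C^{\perp_s})+|I|+1$, then $Q(C)$ is $(I,J)$-locally recoverable.
   Context: $q$ is a power of a prime $p$. Vectors of $\mathbb{F}_q^{2n}$ are written $(\mathbf a|\mathbf b)$, coordinate pair $(a_j,b_j)$ indexed by $j\in\{1,\dots,n\}$. Symplectic form $(\mathbf a|\mathbf b)\cdot_s(\mathbf c|\mathbf d)=\mathbf a\cdot\mathbf d-\mathbf b\cdot\mathbf c$; $C^{\perp_s}$ its dual; $C$ symplectic self-orthogonal if $C\subseteq C^{\perp_s}$. The symplectic weight of $(\mathbf a|\mathbf b)$ is $\#\{j:(a_j,b_j)\ne(0,0)\}$, and $\mathrm{swt}(D)$ is the minimum symplectic weight of a nonzero vector of $D$. Quantum setting: $\xi=e^{2\pi\iota/p}$; $X(a)|x\rangle=|x+a\rangle$, $Z(b)|x\rangle=\xi^{\mathrm{tr}_{q/p}(bx)}|x\rangle$ on $\mathbb C^q$; $E_{(\mathbf a,\mathbf b)}=\bigotimes_jX(a_j)Z(b_j)$. $Q(C)\subseteq\mathbb C^{q^n}$ is the common eigenspace $\{v:Ev=\lambda(E)v\ \forall E\in S\}$, $S$ the commutative group generated by scalars $\xi^\ell\mathcal I$ and $E_{\mathbf y}$, $\mathbf y\in C$, $\lambda$ a character with $\lambda(\xi\mathcal I)=\xi$. Let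 $\Gamma(\rho)=q^{-2}\sum_{a,b}X(a)Z(b)\rho(X(a)Z(b))^\dagger$, and $\Gamma^I$ apply $\Gamma$ to the qudits indexed by $I$, identity elsewhere. $Q$ is $(I,J)$-locally recoverable if there is a trace-preserving quantum operation $\mathcal R$ acting only on the qudits indexed by $J$ with $\mathcal R\circ\Gamma^I(|\varphi\rangle\langle\varphi|)=|\varphi\rangle\langle\varphi|$ for all $|\varphi\rangle\in Q$. *)

theory Defs
  imports Complex_Main "HOL-Library.Cardinality"
begin

definition field_degree :: "'a::{finite,field} itself \<Rightarrow> nat" where
  "field_degree _ = (THE m. CARD('a) = CHAR('a) ^ m)"

definition field_trace :: "'a::{finite,field} \<Rightarrow> 'a" where
  "field_trace x = (\<Sum>i<field_degree TYPE('a). x ^ (CHAR('a) ^ i))"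

text \<open>The trace lies in the prime field {0,1,...,p-1}; identify it with a natural number k < p.\<close>
definition trace_nat :: "'a::{finite,field} \<Rightarrow> nat" where
  "trace_nat x = (THE k. k < CHAR('a) \<and> of_nat k = field_trace x)"

definition xi :: "'a::{finite,field} itself \<Rightarrow> complex" where
  "xi _ = exp (2 * pi * \<i> / of_nat CHAR('a))"

type_synonym 'b mat = "'b \<Rightarrow> 'b \<Rightarrow> complex"

definition mmult :: "'b::finite mat \<Rightarrow> 'b mat \<Rightarrow> 'b mat" where
  "mmult A B = (\<lambda>x y. \<Sum>z\<in>UNIV. A x z * B z y)"

definition madj :: "'b mat \<Rightarrow> 'b mat" where
  "madj A = (\<lambda>x y. cnj (A y x))"

definition mid :: "'b mat" where
  "mid = (\<lambda>x y. if x = y then 1 else 0)"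

definition msmult :: "complex \<Rightarrow> 'b mat \<Rightarrow> 'b mat" where
  "msmult c A = (\<lambda>x y. c * A x y)"

definition mvec :: "'b::finite mat \<Rightarrow> ('b \<Rightarrow> complex) \<Rightarrow> ('b \<Rightarrow> complex)" where
  "mvec A v = (\<lambda>x. \<Sum>y\<in>UNIV. A x y * v y)"

definition proj :: "('b \<Rightarrow> complex) \<Rightarrow> 'b mat" where
  "proj v = (\<lambda>x y. v x * cnj (v y))"

definition Xop :: "'a::{finite,field} \<Rightarrow> 'a mat" where
  "Xop a = (\<lambda>x y. if x = y + a then 1 else 0)"

definition Zop :: "'a::{finite,field} \<Rightarrow> 'a mat" where
  "Zop b = (\<lambda>x y. if x = y then xi TYPE('a) ^ trace_nat (b * y) else 0)"

text \<open>E_(a,b) = tensor over j of X(a_j) Z(b_j), on C^{q^n} with basis labels 'n => 'a.\<close>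
definition Eop :: "('n::finite \<Rightarrow> 'a::{finite,field}) \<times> ('n \<Rightarrow> 'a) \<Rightarrow> ('n \<Rightarrow> 'a) mat" where
  "Eop ab = (\<lambda>x y. \<Prod>j\<in>UNIV. mmult (Xop (fst ab j)) (Zop (snd ab j)) (x j) (y j))"

definition Fq_linear :: "(('n \<Rightarrow> 'a::field) \<times> ('n \<Rightarrow> 'a)) set \<Rightarrow> bool" where
  "Fq_linear C \<longleftrightarrow> (\<lambda>_. 0, \<lambda>_. 0) \<in> C \<and>
     (\<forall>u\<in>C. \<forall>v\<in>C. (\<lambda>j. fst u j + fst v j, \<lambda>j. snd u j + snd v j) \<in> C) \<and>
     (\<forall>c. \<forall>u\<in>C. (\<lambda>j. c * fst u j, \<lambda>j. c * snd u j) \<in> C)"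

definition symp :: "('n::finite \<Rightarrow> 'a::field) \<times> ('n \<Rightarrow> 'a) \<Rightarrow> ('n \<Rightarrow> 'a) \<times> ('n \<Rightarrow> 'a) \<Rightarrow> 'a" where
  "symp u v = (\<Sum>j\<in>UNIV. fst u j * snd v j) - (\<Sum>j\<in>UNIV. snd u j * fst v j)"

definition symp_dual :: "(('n::finite \<Rightarrow> 'a::field) \<times> ('n \<Rightarrow> 'a)) set \<Rightarrow> (('n \<Rightarrow> 'a) \<times> ('n \<Rightarrow> 'a)) set" where
  "symp_dual C = {v. \<forall>u\<in>C. symp u v = 0}"

definition swt_vec :: "('n::finite \<Rightarrow> 'a::zero) \<times> ('n \<Rightarrow> 'a) \<Rightarrow> nat" where
  "swt_vec v = card {j. (fst v j, snd v j) \<noteq> (0, 0)}"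

definition swt :: "(('n::finite \<Rightarrow> 'a::zero) \<times> ('n \<Rightarrow> 'a)) set \<Rightarrow> nat" where
  "swt D = Min {swt_vec v | v. v \<in> D \<and> v \<noteq> (\<lambda>_. 0, \<lambda>_. 0)}"

inductive_set stab_group :: "(('n::finite \<Rightarrow> 'a::{finite,field}) \<times> ('n \<Rightarrow> 'a)) set \<Rightarrow> ('n \<Rightarrow> 'a) mat set"
  for C where
  scal: "msmult (xi TYPE('a) ^ l) mid \<in> stab_group C"
| gen: "y \<in> C \<Longrightarrow> Eop y \<in> stab_group C"
| mult: "A \<in> stab_group C \<Longrightarrow> B \<in> stab_group C \<Longrightarrow> mmult A B \<in> stab_group C"

definition stab_character :: "(('n::finite \<Rightarrow> 'a::{finite,field}) \<times> ('n \<Rightarrow> 'a)) set \<Rightarrow> (('n \<Rightarrow> 'a) mat \<Rightarrow> complex) \<Rightarrow> bool" where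
  "stab_character C lam \<longleftrightarrow>
     (\<forall>A\<in>stab_group C. \<forall>B\<in>stab_group C. lam (mmult A B) = lam A * lam B) \<and>
     lam (msmult (xi TYPE('a)) mid) = xi TYPE('a)"

definition stab_code :: "(('n::finite \<Rightarrow> 'a::{finite,field}) \<times> ('n \<Rightarrow> 'a)) set \<Rightarrow> (('n \<Rightarrow> 'a) mat \<Rightarrow> complex) \<Rightarrow> (('n \<Rightarrow> 'a) \<Rightarrow> complex) set" where
  "stab_code C lam = {v. \<forall>E\<in>stab_group C. mvec E v = (\<lambda>x. lam E * v x)}"

text \<open>Gamma^I = tensor of the channel Gamma on the qudits in I (identity elsewhere):
  q^{-2|I|} sum over a,b supported in I of E_(a,b) rho E_(a,b)^dagger.\<close>
definition Gamma_on :: "'n::finite set \<Rightarrow> ('n \<Rightarrow> 'a::{finite,field}) mat \<Rightarrow> ('n \<Rightarrow> 'a) mat" where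
  "Gamma_on I rho = msmult (1 / of_nat (CARD('a) ^ (2 * card I)))
     (\<lambda>x y. \<Sum>ab\<in>{ab. \<forall>j. j \<notin> I \<longrightarrow> fst ab j = 0 \<and> snd ab j = 0}.
        mmult (mmult (Eop ab) rho) (madj (Eop ab)) x y)"

text \<open>An operator acting only on the qudits indexed by J: A = B_J tensor Id_{J^c}.\<close>
definition acts_only_on :: "'n set \<Rightarrow> ('n \<Rightarrow> 'a::zero) mat \<Rightarrow> bool" where
  "acts_only_on J A \<longleftrightarrow> (\<exists>B :: ('n \<Rightarrow> 'a) mat. \<forall>x y.
      A x y = (if (\<forall>j. j \<notin> J \<longrightarrow> x j = y j)
               then B (\<lambda>j. if j \<in> J then x j else 0) (\<lambda>j. if j \<in> J then y j else 0) else 0))"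

definition kraus_apply :: "('b::finite) mat list \<Rightarrow> 'b mat \<Rightarrow> 'b mat" where
  "kraus_apply Ks rho = (\<lambda>x y. \<Sum>K\<leftarrow>Ks. mmult (mmult K rho) (madj K) x y)"

definition tp_operation_on :: "'n::finite set \<Rightarrow> ('n \<Rightarrow> 'a::{finite,zero}) mat list \<Rightarrow> bool" where
  "tp_operation_on J Ks \<longleftrightarrow> (\<forall>K\<in>set Ks. acts_only_on J K) \<and>
     (\<lambda>x y. \<Sum>K\<leftarrow>Ks. mmult (madj K) K x y) = mid"

definition locally_recoverable :: "(('n::finite \<Rightarrow> 'a::{finite,field}) \<Rightarrow> complex) set \<Rightarrow> 'n set \<Rightarrow> 'n set \<Rightarrow> bool" where
  "locally_recoverable Q I J \<longleftrightarrow> (\<exists>Ks. tp_operation_on J Ks \<and>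
     (\<forall>v\<in>Q. kraus_apply Ks (Gamma_on I (proj v)) = proj v))"

end

(*
  Write \<omega>(t) = \<xi>^tr(t) for the additive character of F_q and A = I \<union> (- J).
  Since |A| < swt(C^\<perp>), no nonzero vector supported on A is symplectically orthogonal to C,
  so restricting C to A gives every vector supported on A. Hence every nonzero error g supported on I has
  <c, g> \<noteq> 0 for some codeword c supported on J.

  On the code, each E_c (c \<in> C) acts by a scalar; dividing it out gives unitaries U_c that
  fix the code pointwise, multiply like the group C, and satisfy U_c E_e = \<omega>(-<c, e>) E_e U_c.
  Averaging the U_c over C_J = C \<inter> V_J against the characters c \<mapsto> \<omega>(<c, f>) yields orthogonal
  projections P_f (f supported on I) acting on J with P_f E_e v = [f = e] E_e v for v in the
  code, by the previous paragraph. The Kraus operators E_f^\<dagger> P_f together with 1 - \<Sigma>_f P_f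
  therefore form a trace-preserving operation on J that undoes every E_e, hence also the
  erasure channel \<Gamma>^I, which is the uniform mixture of the conjugations by E_e.
*)
theory Submission
  imports Defs "HOL-Analysis.Analysis" "HOL-Computational_Algebra.Polynomial"
    "HOL-Computational_Algebra.Primes" "HOL-Library.Function_Algebras"
    "HOL-Library.Product_Plus"
begin

section \<open>Finite fields and their additive character\<close>

lemma prime_CHAR_finite_field: "prime CHAR('a::{finite,field})"
  using prime_CHAR_semidom[where ?'a='a] finite_imp_CHAR_pos[where ?'a='a] by auto

lemma two_le_CHAR_finite_field: "2 \<le> CHAR('a::{finite,field})"
  using prime_CHAR_finite_field prime_ge_2_nat by blast

lemma of_nat_eq_iff_less_CHAR:
  assumes "a < CHAR('a::{finite,field})" "b < CHAR('a)"
  shows "(of_nat a :: 'a) = of_nat b \<longleftrightarrow> a = b"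
proof
  have less: False if "x < CHAR('a)" "y < x" "(of_nat x :: 'a) = of_nat y" for x y
  proof -
    have "(of_nat (x - y) :: 'a) = 0" using that by (simp add: of_nat_diff)
    then have "CHAR('a) dvd x - y" by (simp add: of_nat_eq_0_iff_char_dvd)
    then show False using that by (auto dest: dvd_imp_le)
  qed
  show "a = b" if "(of_nat a :: 'a) = of_nat b"
    using that assms less[of a b] less[of b a] by (cases a b rule: linorder_cases) auto
qed simp

lemma of_nat_mod_CHAR: "(of_nat (n mod CHAR('a)) :: 'a::semiring_1) = of_nat n"
proof -
  have "(of_nat n :: 'a) = of_nat (n mod CHAR('a) + CHAR('a) * (n div CHAR('a)))" by simp
  also have "\<dots> = of_nat (n mod CHAR('a))" by (simp only: of_nat_add of_nat_mult of_nat_CHAR) simp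
  finally show ?thesis by simp
qed

lemma of_nat_power_CHAR: "(of_nat k :: 'a::{finite,field}) ^ CHAR('a) = of_nat k"
proof (induction k)
  case (Suc k)
  have "(of_nat k + 1 :: 'a) ^ CHAR('a) = of_nat k ^ CHAR('a) + 1 ^ CHAR('a)"
    by (rule freshmans_dream[OF prime_CHAR_finite_field refl])
  with Suc show ?case by (simp add: add.commute)
qed (use two_le_CHAR_finite_field[where ?'a='a] in simp)

definition add_subgroup :: "'v::ab_group_add set \<Rightarrow> bool" where
  "add_subgroup S \<longleftrightarrow> 0 \<in> S \<and> (\<forall>x\<in>S. \<forall>y\<in>S. x + y \<in> S) \<and> (\<forall>x\<in>S. - x \<in> S)"

lemma add_subgroup_diff: "add_subgroup S \<Longrightarrow> x \<in> S \<Longrightarrow> y \<in> S \<Longrightarrow> x - y \<in> S"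
  unfolding add_subgroup_def by (metis diff_conv_add_uminus)

lemma add_subgroup_of_nat_mult:
  "add_subgroup S \<Longrightarrow> x \<in> S \<Longrightarrow> of_nat k * x \<in> (S :: 'a::ring_1 set)"
  by (induction k) (auto simp: add_subgroup_def distrib_right)

lemma add_subgroup_of_nat_mult_cancel:
  fixes S :: "'a::{finite,field} set"
  assumes S: "add_subgroup S" and j: "\<not> CHAR('a) dvd j" and jx: "of_nat j * x \<in> S"
  shows "x \<in> S"
proof -
  obtain r where r: "CHAR('a) = Suc (Suc r)"
    using two_le_CHAR_finite_field[where ?'a='a] by (metis add_2_eq_Suc le_Suc_ex)
  have "(of_nat j :: 'a) \<noteq> 0" using j of_nat_eq_0_iff_char_dvd by blast
  moreover have "(of_nat j :: 'a) ^ r * of_nat j * of_nat j = 1 * of_nat j"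
    using of_nat_power_CHAR[of j, where ?'a='a] unfolding r by (simp add: mult_ac)
  ultimately have "(of_nat j :: 'a) ^ r * of_nat j = 1" by (rule mult_right_cancel[THEN iffD1])
  then have "of_nat (j ^ r) * (of_nat j * x) = x"
    by (simp add: mult.assoc[symmetric])
  then show ?thesis using add_subgroup_of_nat_mult[OF S jx, of "j ^ r"] by metis
qed

definition adjoin :: "'a::{finite,field} set \<Rightarrow> 'a \<Rightarrow> 'a set" where
  "adjoin S x = (\<lambda>(s, k). s + of_nat k * x) ` (S \<times> {..<CHAR('a)})"

lemma inj_on_adjoin:
  fixes S :: "'a::{finite,field} set"
  assumes S: "add_subgroup S" and x: "x \<notin> S"
  shows "inj_on (\<lambda>(s, k). s + of_nat k * x) (S \<times> {..<CHAR('a)})"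
proof (rule inj_onI, clarify)
  have same_k: "k = k'"
    if "s \<in> S" "s' \<in> S" "k < CHAR('a)" "k' \<le> k" "s + of_nat k * x = s' + of_nat k' * x"
    for s s' k k'
  proof (rule ccontr)
    assume "k \<noteq> k'"
    then have "\<not> CHAR('a) dvd k - k'" using that by (auto dest: dvd_imp_le)
    moreover have "of_nat (k - k') * x = s' - s"
      using that by (simp add: of_nat_diff algebra_simps)
    ultimately show False
      using add_subgroup_of_nat_mult_cancel[OF S] add_subgroup_diff[OF S] that x by metis
  qed
  fix s k s' k'
  assume "s \<in> S" "k < CHAR('a)" "s' \<in> S" "k' < CHAR('a)" "s + of_nat k * x = s' + of_nat k' * x"
  then show "s = s' \<and> k = k'"
    using same_k[of s s' k k'] same_k[of s' s k' k] by (cases "k' \<le> k") auto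
qed

lemma card_adjoin:
  "add_subgroup (S::'a::{finite,field} set) \<Longrightarrow> x \<notin> S \<Longrightarrow> card (adjoin S x) = card S * CHAR('a)"
  unfolding adjoin_def by (simp add: card_image inj_on_adjoin card_cartesian_product)

lemma subset_adjoin: "S \<subseteq> adjoin S (x::'a::{finite,field})"
proof
  fix s assume "s \<in> S"
  then have "s = (\<lambda>(s, k). s + of_nat k * x) (s, 0)" "(s, 0) \<in> S \<times> {..<CHAR('a)}"
    using two_le_CHAR_finite_field[where ?'a='a] by auto
  then show "s \<in> adjoin S x" unfolding adjoin_def by blast
qed

lemma mem_adjoin:
  assumes "add_subgroup S" shows "x \<in> adjoin S (x::'a::{finite,field})"
proof -
  have "x = (\<lambda>(s, k). s + of_nat k * x) (0, 1)" "(0, 1) \<in> S \<times> {..<CHAR('a)}"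
    using assms two_le_CHAR_finite_field[where ?'a='a] by (auto simp: add_subgroup_def)
  then show ?thesis unfolding adjoin_def by blast
qed

lemma add_subgroup_adjoin:
  fixes S :: "'a::{finite,field} set"
  assumes S: "add_subgroup S"
  shows "add_subgroup (adjoin S x)"
  unfolding add_subgroup_def
proof (intro conjI ballI)
  show "0 \<in> adjoin S x" using subset_adjoin S unfolding add_subgroup_def by blast
next
  fix u v assume "u \<in> adjoin S x" "v \<in> adjoin S x"
  then obtain s k s' k' where "s \<in> S" "s' \<in> S" "u = s + of_nat k * x" "v = s' + of_nat k' * x"
    unfolding adjoin_def by auto
  then have "u + v = s + s' + of_nat ((k + k') mod CHAR('a)) * x"
    "(s + s', (k + k') mod CHAR('a)) \<in> S \<times> {..<CHAR('a)}"
    using S two_le_CHAR_finite_field[where ?'a='a]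
    by (auto simp: of_nat_mod_CHAR algebra_simps add_subgroup_def)
  then show "u + v \<in> adjoin S x" unfolding adjoin_def by force
next
  fix u assume "u \<in> adjoin S x"
  then obtain s k where "s \<in> S" "k < CHAR('a)" "u = s + of_nat k * x"
    unfolding adjoin_def by auto
  then have "- u = - s + of_nat ((CHAR('a) - k) mod CHAR('a)) * x"
    "(- s, (CHAR('a) - k) mod CHAR('a)) \<in> S \<times> {..<CHAR('a)}"
    using S two_le_CHAR_finite_field[where ?'a='a]
    by (auto simp: of_nat_mod_CHAR of_nat_diff algebra_simps add_subgroup_def)
  then show "- u \<in> adjoin S x" unfolding adjoin_def by force
qed

lemma card_add_subgroup_dvd_CARD:
  fixes S :: "'a::{finite,field} set"
  assumes "add_subgroup S"
  shows "\<exists>i. card S * CHAR('a) ^ i = CARD('a)"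
  using assms
proof (induction "card (UNIV - S)" arbitrary: S rule: less_induct)
  case (less S)
  show ?case
  proof (cases "S = UNIV")
    case False
    then obtain x where x: "x \<notin> S" by blast
    then have "S \<subset> adjoin S x" using subset_adjoin mem_adjoin[OF less.prems] by blast
    then have "card (UNIV - adjoin S x) < card (UNIV - S)" by (intro psubset_card_mono) auto
    then obtain i where "card (adjoin S x) * CHAR('a) ^ i = CARD('a)"
      using less.hyps add_subgroup_adjoin[OF less.prems] by blast
    then show ?thesis
      using card_adjoin[OF less.prems x] by (intro exI[of _ "Suc i"]) (simp add: mult_ac)
  qed (auto intro: exI[of _ 0])
qed

lemma CARD_eq_CHAR_power_field_degree:
  "CARD('a::{finite,field}) = CHAR('a) ^ field_degree TYPE('a)"
proof -
  have "add_subgroup {0::'a}" by (simp add: add_subgroup_def)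
  from card_add_subgroup_dvd_CARD[OF this] obtain m where "card {0::'a} * CHAR('a) ^ m = CARD('a)"
    by blast
  then have m: "CARD('a) = CHAR('a) ^ m" by simp
  have "field_degree TYPE('a) = m"
    unfolding field_degree_def
    by (rule the_equality) (use m two_le_CHAR_finite_field[where ?'a='a] power_inject_exp in auto)
  then show ?thesis using m by simp
qed

lemma field_degree_pos: "0 < field_degree TYPE('a::{finite,field})"
proof (rule ccontr)
  assume "\<not> ?thesis"
  then have "CARD('a) = 1" using CARD_eq_CHAR_power_field_degree[where ?'a='a] by simp
  moreover have "card {0::'a, 1} \<le> CARD('a)" by (intro card_mono) auto
  ultimately show False by simp
qed

lemma power_CARD_finite_field: "(x::'a::{finite,field}) ^ CARD('a) = x"
proof (cases "x = 0")
  case False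
  let ?U = "UNIV - {0::'a}"
  have "bij_betw ((*) x) ?U ?U"
    by (rule bij_betwI[of _ _ _ "\<lambda>y. y / x"]) (use False in auto)
  then have "(\<Prod>y\<in>?U. x * y) = \<Prod>?U" by (rule prod.reindex_bij_betw)
  then have "x ^ card ?U * \<Prod>?U = 1 * \<Prod>?U" by (simp add: prod.distrib)
  then have "x ^ (CARD('a) - 1) = 1" by (simp add: card_Diff_singleton)
  moreover have "CARD('a) = Suc (CARD('a) - 1)"
    using finite_UNIV_card_ge_0[where ?'a='a] by simp
  ultimately show ?thesis by (metis mult.right_neutral power_Suc)
qed (use finite_UNIV_card_ge_0[where ?'a='a] in simp)

lemma field_trace_add: "field_trace (x + y) = field_trace x + field_trace (y::'a::{finite,field})"
  unfolding field_trace_def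
  by (simp add: freshmans_dream'[OF prime_CHAR_finite_field] sum.distrib)

lemma field_trace_power_CHAR: "field_trace (x::'a::{finite,field}) ^ CHAR('a) = field_trace x"
proof -
  let ?m = "field_degree TYPE('a)"
  define f where "f i = x ^ (CHAR('a) ^ i)" for i
  have "f ?m = f 0"
    unfolding f_def
    using power_CARD_finite_field[of x] CARD_eq_CHAR_power_field_degree[where ?'a='a] by simp
  have "field_trace x ^ CHAR('a) = (\<Sum>i<?m. f i ^ CHAR('a))"
    unfolding field_trace_def f_def by (rule freshmans_dream_sum[OF prime_CHAR_finite_field refl])
  also have "\<dots> = (\<Sum>i<?m. f (Suc i))"
    by (simp add: f_def power_mult[symmetric] mult.commute)
  also have "\<dots> = (\<Sum>i<?m. f i)"
    using sum.lessThan_Suc_shift[of f ?m] \<open>f ?m = f 0\<close> by (simp add: add.commute)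
  finally show ?thesis unfolding field_trace_def f_def .
qed

text \<open>The prime field: the roots of \<open>X\<^sup>p - X\<close> are exactly the \<open>p\<close> elements
  \<open>0, 1, \<dots>, p - 1\<close>.\<close>
lemma power_CHAR_eq_self_imp_of_nat:
  assumes "(y::'a::{finite,field}) ^ CHAR('a) = y"
  shows "\<exists>k<CHAR('a). of_nat k = y"
proof -
  let ?p = "CHAR('a)"
  define P where "P = monom (1::'a) ?p - monom 1 1"
  have poly_P: "poly P z = z ^ ?p - z" for z by (simp add: P_def poly_monom)
  have "coeff P ?p = 1" using two_le_CHAR_finite_field[where ?'a='a] by (simp add: P_def)
  then have "P \<noteq> 0" by auto
  moreover have "degree P \<le> ?p"
    unfolding P_def using two_le_CHAR_finite_field[where ?'a='a]
    by (intro degree_diff_le) (auto intro: order.trans[OF degree_monom_le])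
  ultimately have "card {z. poly P z = 0} \<le> ?p" by (rule le_trans[OF card_poly_roots_bound])
  moreover have sub: "of_nat ` {..<?p} \<subseteq> {z. poly P z = 0}"
    by (auto simp: poly_P of_nat_power_CHAR)
  moreover have "card (of_nat ` {..<?p} :: 'a set) = ?p"
    by (subst card_image) (auto intro: inj_onI simp: of_nat_eq_iff_less_CHAR)
  ultimately have "of_nat ` {..<?p} = {z. poly P z = 0}"
    by (intro card_seteq) auto
  moreover have "poly P y = 0" using assms by (simp add: poly_P)
  ultimately show ?thesis by (metis (mono_tags, lifting) imageE lessThan_iff mem_Collect_eq)
qed

lemma trace_nat_less_CHAR: "trace_nat (x::'a::{finite,field}) < CHAR('a)"
  and of_nat_trace_nat: "of_nat (trace_nat x) = field_trace x"
proof -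
  obtain k where k: "k < CHAR('a)" "of_nat k = field_trace x"
    using power_CHAR_eq_self_imp_of_nat[OF field_trace_power_CHAR] by blast
  have "trace_nat x = k"
    unfolding trace_nat_def
  proof (rule the_equality)
    fix k' assume "k' < CHAR('a) \<and> of_nat k' = field_trace x"
    with k show "k' = k" using of_nat_eq_iff_less_CHAR[of k' k, where ?'a='a] by simp
  qed (use k in simp)
  with k show "trace_nat x < CHAR('a)" "of_nat (trace_nat x) = field_trace x" by simp_all
qed

text \<open>The trace is a polynomial of degree \<open>p\<^sup>m\<^sup>-\<^sup>1 < q\<close>, so it cannot vanish on all
  of \<open>\<bbbF>\<^sub>q\<close>.\<close>
lemma field_trace_not_identically_zero: "\<exists>x::'a::{finite,field}. field_trace x \<noteq> 0"
proof (rule ccontr)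
  assume trace_zero: "\<not> ?thesis"
  let ?p = "CHAR('a)" and ?m = "field_degree TYPE('a)"
  have m: "0 < ?m" by (rule field_degree_pos)
  have p: "1 < ?p" using two_le_CHAR_finite_field[where ?'a='a] by simp
  define T where "T = (\<Sum>i<?m. monom (1::'a) (?p ^ i))"
  have coeff_T: "coeff T k = (\<Sum>i<?m. if ?p ^ i = k then 1 else 0)" for k
    by (simp add: T_def coeff_sum)
  have "coeff T (?p ^ (?m - 1)) = (\<Sum>i\<in>{?m - 1}. 1)"
    unfolding coeff_T
    by (rule sum.mono_neutral_cong_right) (use m p power_inject_exp in auto)
  then have "T \<noteq> 0" by auto
  moreover have "degree T \<le> ?p ^ (?m - 1)"
  proof (rule degree_le, intro allI impI)
    fix k assume k: "?p ^ (?m - 1) < k"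
    have "?p ^ i \<noteq> k" if "i < ?m" for i
    proof -
      have "?p ^ i \<le> ?p ^ (?m - 1)" using that p by (intro power_increasing) auto
      then show ?thesis using k by simp
    qed
    then show "coeff T k = 0" unfolding coeff_T by simp
  qed
  ultimately have "card {x. poly T x = 0} \<le> ?p ^ (?m - 1)"
    by (rule le_trans[OF card_poly_roots_bound])
  moreover have "{x. poly T x = 0} = (UNIV :: 'a set)"
    using trace_zero by (auto simp: T_def poly_sum poly_monom field_trace_def)
  moreover have "?p ^ (?m - 1) < ?p ^ ?m" using m p by (intro power_strict_increasing) auto
  ultimately show False using CARD_eq_CHAR_power_field_degree[where ?'a='a] by simp
qed

definition add_char :: "'a::{finite,field} \<Rightarrow> complex" where
  "add_char t = xi TYPE('a) ^ trace_nat t"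

lemma xi_power_eq_1_iff: "xi TYPE('a::{finite,field}) ^ k = 1 \<longleftrightarrow> CHAR('a) dvd k"
proof -
  have "xi TYPE('a) ^ k = exp (2 * of_real pi * \<i> * of_nat k / of_nat CHAR('a))"
    unfolding xi_def by (simp add: exp_of_nat_mult[symmetric] algebra_simps)
  then show ?thesis
    using complex_root_unity_eq_1[of "CHAR('a)" k] two_le_CHAR_finite_field[where ?'a='a] by simp
qed

lemma norm_add_char: "norm (add_char t) = 1"
  unfolding add_char_def xi_def by (simp add: norm_power norm_exp_eq_Re)

lemma add_char_nonzero: "add_char t \<noteq> 0"
  using norm_add_char[of t] by auto

lemma add_char_add: "add_char (s + t) = add_char s * add_char (t::'a::{finite,field})"
proof -
  let ?p = "CHAR('a)"
  have "(of_nat (trace_nat (s + t)) :: 'a) = of_nat ((trace_nat s + trace_nat t) mod ?p)"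
    by (simp add: of_nat_mod_CHAR of_nat_trace_nat field_trace_add)
  then have "trace_nat (s + t) = (trace_nat s + trace_nat t) mod ?p"
    using two_le_CHAR_finite_field[where ?'a='a]
    by (subst (asm) of_nat_eq_iff_less_CHAR) (auto intro: trace_nat_less_CHAR)
  moreover have "xi TYPE('a) ^ (k mod ?p) = xi TYPE('a) ^ k" for k
  proof -
    have "xi TYPE('a) ^ k = xi TYPE('a) ^ (k mod ?p) * (xi TYPE('a) ^ ?p) ^ (k div ?p)"
      by (metis mod_mult_div_eq power_add power_mult)
    then show ?thesis using xi_power_eq_1_iff[of ?p, where ?'a='a] by simp
  qed
  ultimately show ?thesis unfolding add_char_def by (simp add: power_add)
qed

lemma add_char_zero [simp]: "add_char 0 = 1"
  using add_char_add[of 0 0] add_char_nonzero[of 0] by auto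

lemma add_char_uminus: "add_char (- t) = cnj (add_char t)"
proof -
  have "add_char (- t) * add_char t = 1" by (simp flip: add_char_add)
  moreover have "cnj (add_char t) * add_char t = 1"
    using complex_norm_square[of "add_char t"] by (simp add: norm_add_char mult.commute)
  ultimately show ?thesis using add_char_nonzero[of t] by (metis mult_right_cancel)
qed

lemma add_char_diff: "add_char (s - t) = add_char s * cnj (add_char t)"
  using add_char_add[of s "- t"] by (simp add: add_char_uminus)

lemma cnj_add_char_mult: "cnj (add_char t) * add_char t = 1"
  using add_char_add[of "- t" t] by (simp add: add_char_uminus)

lemma add_char_sum: "add_char (\<Sum>j\<in>A. f j) = (\<Prod>j\<in>A. add_char (f j))"
  by (induction A rule: infinite_finite_induct) (simp_all add: add_char_add)

lemma add_char_nontrivial: "\<exists>t::'a::{finite,field}. add_char t \<noteq> 1"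
proof -
  obtain x :: 'a where "field_trace x \<noteq> 0" using field_trace_not_identically_zero by blast
  then have "trace_nat x \<noteq> 0" by (metis of_nat_0 of_nat_trace_nat)
  then have "\<not> CHAR('a) dvd trace_nat x" using trace_nat_less_CHAR[of x] by (auto dest: dvd_imp_le)
  then show ?thesis unfolding add_char_def xi_power_eq_1_iff by blast
qed

section \<open>Operators on qudits\<close>

lemma mmult_assoc: "mmult (mmult A B) (C::'b::finite mat) = mmult A (mmult B C)"
  unfolding mmult_def
  by (intro ext) (simp add: sum_distrib_left sum_distrib_right mult.assoc, rule sum.swap)

lemma mmult_msmult_left: "mmult (msmult c A) (B::'b::finite mat) = msmult c (mmult A B)"
  unfolding mmult_def msmult_def by (simp add: sum_distrib_left mult.assoc)

lemma mmult_msmult_right: "mmult A (msmult c (B::'b::finite mat)) = msmult c (mmult A B)"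
  unfolding mmult_def msmult_def by (simp add: sum_distrib_left mult_ac)

lemma msmult_msmult: "msmult a (msmult b A) = msmult (a * b) A"
  unfolding msmult_def by (simp add: mult.assoc)

lemma msmult_1 [simp]: "msmult 1 A = A"
  unfolding msmult_def by simp

lemma mmult_mid_left [simp]: "mmult mid (A::'b::finite mat) = A"
  unfolding mmult_def mid_def by (simp add: if_distrib[of "\<lambda>r. r * c" for c] cong: if_cong)

lemma mmult_mid_right [simp]: "mmult (A::'b::finite mat) mid = A"
  unfolding mmult_def mid_def by (simp add: if_distrib[of "\<lambda>r. c * r" for c] cong: if_cong)

lemma mmult_zero_left [simp]: "mmult 0 (A::'b::finite mat) = 0"
  unfolding mmult_def by (simp add: fun_eq_iff)

lemma mmult_zero_right [simp]: "mmult (A::'b::finite mat) 0 = 0"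
  unfolding mmult_def by (simp add: fun_eq_iff)

lemma mmult_sum_left:
  "mmult (\<lambda>x y. \<Sum>e\<in>S. M e x y) K = (\<lambda>x y. \<Sum>e\<in>S. mmult (M e) (K::'b::finite mat) x y)"
  unfolding mmult_def by (intro ext) (simp add: sum_distrib_right, rule sum.swap)

lemma mmult_sum_right:
  "mmult K (\<lambda>x y. \<Sum>e\<in>S. M e x y) = (\<lambda>x y. \<Sum>e\<in>S. mmult (K::'b::finite mat) (M e) x y)"
  unfolding mmult_def by (intro ext) (simp add: sum_distrib_left, rule sum.swap)

lemma mmult_diff_left: "mmult (A - B) (K::'b::finite mat) = mmult A K - mmult B K"
  unfolding mmult_def by (intro ext) (simp add: left_diff_distrib sum_subtractf)

lemma mmult_diff_right: "mmult K (A - B) = mmult (K::'b::finite mat) A - mmult K B"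
  unfolding mmult_def by (intro ext) (simp add: right_diff_distrib sum_subtractf)

lemma madj_mmult: "madj (mmult A (B::'b::finite mat)) = mmult (madj B) (madj A)"
  unfolding madj_def mmult_def by (simp add: mult.commute)

lemma madj_madj [simp]: "madj (madj A) = A"
  unfolding madj_def by simp

lemma madj_msmult: "madj (msmult c A) = msmult (cnj c) (madj A)"
  unfolding madj_def msmult_def by simp

lemma madj_mid [simp]: "madj mid = mid"
  unfolding madj_def mid_def by (intro ext) auto

lemma madj_diff: "madj (A - B) = madj A - madj B"
  unfolding madj_def by (simp add: fun_eq_iff)

lemma mvec_mmult: "mvec (mmult A B) v = mvec A (mvec (B::'b::finite mat) v)"
  unfolding mvec_def mmult_def
  by (intro ext) (simp add: sum_distrib_left sum_distrib_right mult.assoc, rule sum.swap)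

lemma mvec_msmult: "mvec (msmult c A) v = (\<lambda>x. c * mvec (A::'b::finite mat) v x)"
  unfolding mvec_def msmult_def by (simp add: sum_distrib_left mult.assoc)

lemma mvec_diff: "mvec (A - B) v = (\<lambda>x. mvec A v x - mvec (B::'b::finite mat) v x)"
  unfolding mvec_def by (simp add: left_diff_distrib sum_subtractf)

lemma mvec_mid [simp]: "mvec mid v = (v :: 'b::finite \<Rightarrow> complex)"
  unfolding mvec_def mid_def by (simp add: if_distrib[of "\<lambda>r. r * c" for c] cong: if_cong)

lemma mvec_zero [simp]: "mvec A (\<lambda>_. 0) = (\<lambda>_. 0::complex)"
  unfolding mvec_def by simp

lemma mvec_scale: "mvec A (\<lambda>x. c * v x) = (\<lambda>x. c * mvec (A::'b::finite mat) v x)"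
  unfolding mvec_def by (simp add: sum_distrib_left mult_ac)

lemma mvec_sum: "mvec (\<lambda>x y. \<Sum>e\<in>S. M e x y) v = (\<lambda>x. \<Sum>e\<in>S. mvec (M e) (v::'b::finite \<Rightarrow> complex) x)"
  unfolding mvec_def by (intro ext) (simp add: sum_distrib_right, rule sum.swap)

lemma proj_mvec: "mmult (mmult K (proj w)) (madj K) = proj (mvec (K::'b::finite mat) w)"
  unfolding mmult_def proj_def madj_def mvec_def
  by (intro ext) (simp add: sum_distrib_left sum_distrib_right mult_ac)

lemma proj_zero [simp]: "proj (\<lambda>_. 0) = 0"
  unfolding proj_def by (simp add: fun_eq_iff)

definition dot :: "('n::finite \<Rightarrow> 'a::comm_ring) \<Rightarrow> ('n \<Rightarrow> 'a) \<Rightarrow> 'a" where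
  "dot b y = (\<Sum>j\<in>UNIV. b j * y j)"

lemma dot_add_left: "dot (b + c) y = dot b y + dot c y"
  unfolding dot_def by (simp add: distrib_right sum.distrib)

lemma dot_add_right: "dot b (y + z) = dot b y + dot b z"
  unfolding dot_def by (simp add: distrib_left sum.distrib)

lemma dot_uminus_left: "dot (- b) y = - dot b y"
  unfolding dot_def by (simp add: sum_negf)

lemma dot_uminus_right: "dot b (- y) = - dot b y"
  unfolding dot_def by (simp add: sum_negf)

lemma dot_commute: "dot b y = dot y b"
  unfolding dot_def by (simp add: mult.commute)

lemma mmult_Xop_Zop: "mmult (Xop a) (Zop b) s t = (if s = t + a then add_char (b * t) else 0)"
  unfolding mmult_def Zop_def Xop_def add_char_def
  by (simp add: if_distrib[of "\<lambda>r. c * r" for c] cong: if_cong)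

lemma Eop_apply: "Eop u x y = (if x = y + fst u then add_char (dot (snd u) y) else 0)"
proof (cases "x = y + fst u")
  case True
  then have "Eop u x y = (\<Prod>j\<in>UNIV. add_char (snd u j * y j))"
    unfolding Eop_def mmult_Xop_Zop by simp
  also have "\<dots> = add_char (dot (snd u) y)"
    unfolding dot_def by (rule add_char_sum[symmetric])
  finally show ?thesis using True by simp
next
  case False
  then obtain j where "x j \<noteq> y j + fst u j" by (auto simp: fun_eq_iff)
  then have "Eop u x y = 0"
    unfolding Eop_def mmult_Xop_Zop by (intro prod_zero) auto
  with False show ?thesis by simp
qed

lemma mmult_Eop: "mmult (Eop u) (Eop w) = msmult (add_char (dot (snd u) (fst w))) (Eop (u + w))"
proof (intro ext)
  fix x y
  have "mmult (Eop u) (Eop w) x y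
      = (\<Sum>z\<in>UNIV. Eop u x z * (if z = y + fst w then add_char (dot (snd w) y) else 0))"
    unfolding mmult_def Eop_apply[of w] ..
  also have "\<dots> = Eop u x (y + fst w) * add_char (dot (snd w) y)"
    by (simp add: if_distrib[of "\<lambda>r. c * r" for c] cong: if_cong)
  also have "\<dots> = msmult (add_char (dot (snd u) (fst w))) (Eop (u + w)) x y"
    unfolding msmult_def Eop_apply
    by (auto simp: add.assoc dot_add_right dot_add_left add_char_add mult_ac)
  finally show "mmult (Eop u) (Eop w) x y
      = msmult (add_char (dot (snd u) (fst w))) (Eop (u + w)) x y" .
qed

lemma Eop_zero [simp]: "Eop 0 = mid"
  unfolding mid_def by (intro ext) (simp add: Eop_apply dot_def)

lemma madj_Eop: "madj (Eop u) = msmult (add_char (dot (snd u) (fst u))) (Eop (- u))"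
proof (intro ext)
  fix x y
  show "madj (Eop u) x y = msmult (add_char (dot (snd u) (fst u))) (Eop (- u)) x y"
  proof (cases "y = x + fst u")
    case True
    then have "madj (Eop u) x y = add_char (- dot (snd u) x)"
      unfolding madj_def Eop_apply by (simp add: add_char_uminus)
    also have "\<dots> = add_char (dot (snd u) (fst u)) * add_char (dot (- snd u) y)"
      by (simp add: True dot_add_right dot_uminus_left flip: add_char_add)
    finally show ?thesis using True unfolding msmult_def Eop_apply by auto
  next
    case False
    then show ?thesis unfolding msmult_def madj_def Eop_apply by auto
  qed
qed

lemma mmult_Eop_madj_Eop: "mmult (Eop u) (madj (Eop u)) = mid"
  by (simp add: madj_Eop mmult_msmult_right mmult_Eop msmult_msmult dot_uminus_right
      flip: add_char_add)

lemma mmult_madj_Eop_Eop: "mmult (madj (Eop u)) (Eop u) = mid"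
  by (simp add: madj_Eop mmult_msmult_left mmult_Eop msmult_msmult dot_uminus_left
      flip: add_char_add)

lemma mvec_Eop: "mvec (Eop u) v x = add_char (dot (snd u) (x - fst u)) * v (x - fst u)"
  unfolding mvec_def Eop_apply
  by (simp add: if_distrib[of "\<lambda>r. r * c" for c] cong: if_cong flip: diff_eq_eq)

lemma sum_norm_mvec_Eop:
  "(\<Sum>x\<in>UNIV. (norm (mvec (Eop u) v x))\<^sup>2) = (\<Sum>x\<in>UNIV. (norm (v x))\<^sup>2)"
proof -
  have "(\<Sum>x\<in>UNIV. (norm (mvec (Eop u) v x))\<^sup>2) = (\<Sum>x\<in>UNIV. (norm (v (x - fst u)))\<^sup>2)"
    unfolding mvec_Eop by (simp add: norm_mult norm_add_char)
  also have "\<dots> = (\<Sum>x\<in>UNIV. (norm (v x))\<^sup>2)"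
    by (rule sum.reindex_bij_witness[of _ "\<lambda>x. x + fst u" "\<lambda>x. x - fst u"]) auto
  finally show ?thesis .
qed

definition zero_outside :: "'n set \<Rightarrow> ('n \<Rightarrow> 'a::zero) \<Rightarrow> 'n \<Rightarrow> 'a" where
  "zero_outside J x = (\<lambda>j. if j \<in> J then x j else 0)"

definition agree_outside :: "'n set \<Rightarrow> ('n \<Rightarrow> 'a) \<Rightarrow> ('n \<Rightarrow> 'a) \<Rightarrow> bool" where
  "agree_outside J x y \<longleftrightarrow> (\<forall>j. j \<notin> J \<longrightarrow> x j = y j)"

lemma zero_outside_idem [simp]: "zero_outside J (zero_outside J x) = zero_outside J x"
  unfolding zero_outside_def by auto

lemma agree_outside_zero_outside [simp]: "agree_outside J (zero_outside J x) (zero_outside J y)"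
  unfolding agree_outside_def zero_outside_def by auto

lemma agree_outside_commute: "agree_outside J x y \<longleftrightarrow> agree_outside J y x"
  unfolding agree_outside_def by auto

lemma agree_outside_trans: "agree_outside J x y \<Longrightarrow> agree_outside J y z \<Longrightarrow> agree_outside J x z"
  unfolding agree_outside_def by auto

lemma acts_only_on_iff:
  "acts_only_on J A \<longleftrightarrow> (\<forall>x y. A x y =
     (if agree_outside J x y then A (zero_outside J x) (zero_outside J y) else 0))"
    (is "_ \<longleftrightarrow> (\<forall>x y. A x y = ?rhs A x y)")
proof
  assume "acts_only_on J A"
  then obtain B where B: "\<And>x y. A x y = ?rhs B x y"
    unfolding acts_only_on_def agree_outside_def zero_outside_def by blast
  show "\<forall>x y. A x y = ?rhs A x y" by (simp add: B)
next
  assume "\<forall>x y. A x y = ?rhs A x y"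
  then show "acts_only_on J A"
    unfolding acts_only_on_def agree_outside_def zero_outside_def by blast
qed

lemma acts_only_onD:
  "acts_only_on J A \<Longrightarrow>
     A x y = (if agree_outside J x y then A (zero_outside J x) (zero_outside J y) else 0)"
  unfolding acts_only_on_iff by blast

lemma acts_only_on_mid: "acts_only_on J mid"
  unfolding acts_only_on_iff mid_def agree_outside_def zero_outside_def by (auto simp: fun_eq_iff)

lemma acts_only_on_msmult:
  assumes "acts_only_on J A" shows "acts_only_on J (msmult c A)"
  unfolding acts_only_on_iff msmult_def
proof (intro allI)
  fix x y
  show "c * A x y
      = (if agree_outside J x y then c * A (zero_outside J x) (zero_outside J y) else 0)"
    using acts_only_onD[OF assms, of x y] by simp
qed

lemma acts_only_on_madj:
  assumes "acts_only_on J A" shows "acts_only_on J (madj A)"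
  unfolding acts_only_on_iff madj_def
proof (intro allI)
  fix x y
  show "cnj (A y x)
      = (if agree_outside J x y then cnj (A (zero_outside J y) (zero_outside J x)) else 0)"
    using acts_only_onD[OF assms, of y x] by (simp add: agree_outside_commute)
qed

lemma acts_only_on_sum:
  assumes "\<And>e. e \<in> S \<Longrightarrow> acts_only_on J (M e)"
  shows "acts_only_on J (\<lambda>x y. \<Sum>e\<in>S. M e x y)"
  unfolding acts_only_on_iff
proof (intro allI)
  fix x y
  have "M e x y = (if agree_outside J x y then M e (zero_outside J x) (zero_outside J y) else 0)"
    if "e \<in> S" for e
    using acts_only_onD[OF assms[OF that]] .
  then show "(\<Sum>e\<in>S. M e x y) = (if agree_outside J x y
      then \<Sum>e\<in>S. M e (zero_outside J x) (zero_outside J y) else 0)"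
    by (simp cong: sum.cong)
qed

lemma acts_only_on_diff:
  assumes "acts_only_on J A" "acts_only_on J B" shows "acts_only_on J (A - B)"
  unfolding acts_only_on_iff
proof (intro allI)
  fix x y
  show "(A - B) x y
      = (if agree_outside J x y then (A - B) (zero_outside J x) (zero_outside J y) else 0)"
    using acts_only_onD[OF assms(1), of x y] acts_only_onD[OF assms(2), of x y] by simp
qed

lemma sum_agree_outside:
  fixes x :: "'n::finite \<Rightarrow> 'a::{finite,zero}"
  shows "(\<Sum>z\<in>UNIV. if agree_outside J x z then g (zero_outside J z) else 0)
     = (\<Sum>w\<in>{w. \<forall>j. j \<notin> J \<longrightarrow> w j = 0}. g w)"
proof -
  have "(\<Sum>z\<in>UNIV. if agree_outside J x z then g (zero_outside J z) else 0)
      = (\<Sum>z\<in>{z. agree_outside J x z}. g (zero_outside J z))"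
    by (simp add: sum.If_cases)
  also have "\<dots> = (\<Sum>w\<in>{w. \<forall>j. j \<notin> J \<longrightarrow> w j = 0}. g w)"
    by (rule sum.reindex_bij_witness[of _ "\<lambda>w j. if j \<in> J then w j else x j" "zero_outside J"])
       (auto simp: agree_outside_def zero_outside_def)
  finally show ?thesis .
qed

lemma mmult_acts_only_on_apply:
  assumes A: "acts_only_on J A" and B: "acts_only_on J (B::('n::finite \<Rightarrow> 'a::{finite,zero}) mat)"
  shows "mmult A B x y = (if agree_outside J x y
    then \<Sum>w\<in>{w. \<forall>j. j \<notin> J \<longrightarrow> w j = 0}. A (zero_outside J x) w * B w (zero_outside J y) else 0)"
proof (cases "agree_outside J x y")
  case True
  have "A x z * B z y = (if agree_outside J x z
      then A (zero_outside J x) (zero_outside J z) * B (zero_outside J z) (zero_outside J y)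
      else 0)"
    for z
  proof (cases "agree_outside J x z")
    case True
    then have "agree_outside J z y"
      using \<open>agree_outside J x y\<close> by (meson agree_outside_trans agree_outside_commute)
    with True show ?thesis using acts_only_onD[OF A, of x z] acts_only_onD[OF B, of z y] by simp
  qed (simp add: acts_only_onD[OF A, of x z])
  then show ?thesis
    using True unfolding mmult_def
    by (simp add:
        sum_agree_outside[where g = "\<lambda>w. A (zero_outside J x) w * B w (zero_outside J y)"])
next
  case False
  have "A x z * B z y = 0" for z
    using acts_only_onD[OF A, of x z] acts_only_onD[OF B, of z y] False
    by (auto dest: agree_outside_trans)
  then have "mmult A B x y = 0" unfolding mmult_def by (intro sum.neutral) blast
  with False show ?thesis by simp
qed

lemma acts_only_on_mmult:
  "acts_only_on J A \<Longrightarrow> acts_only_on J B \<Longrightarrow>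
    acts_only_on J (mmult A (B::('n::finite \<Rightarrow> 'a::{finite,zero}) mat))"
  unfolding acts_only_on_iff[of J "mmult A B"] by (simp add: mmult_acts_only_on_apply)

lemma acts_only_on_Eop:
  fixes u :: "('n::finite \<Rightarrow> 'a::{finite,field}) \<times> ('n \<Rightarrow> 'a)"
  assumes "\<forall>j. j \<notin> J \<longrightarrow> fst u j = 0 \<and> snd u j = 0"
  shows "acts_only_on J (Eop u)"
  unfolding acts_only_on_iff
proof (intro allI)
  fix x y :: "'n \<Rightarrow> 'a"
  have "dot (snd u) (zero_outside J y) = dot (snd u) y"
    unfolding dot_def zero_outside_def using assms by (intro sum.cong) auto
  moreover have "x = y + fst u \<longleftrightarrow> agree_outside J x y \<and> zero_outside J x = zero_outside J y + fst u"
  proof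
    assume "x = y + fst u"
    then show "agree_outside J x y \<and> zero_outside J x = zero_outside J y + fst u"
      using assms by (auto simp: agree_outside_def zero_outside_def)
  next
    assume h: "agree_outside J x y \<and> zero_outside J x = zero_outside J y + fst u"
    show "x = y + fst u"
    proof
      fix j
      have "zero_outside J x j = zero_outside J y j + fst u j"
        using fun_cong[OF conjunct2[OF h], of j] by simp
      then show "x j = (y + fst u) j"
        using h assms by (cases "j \<in> J") (auto simp: agree_outside_def zero_outside_def)
    qed
  qed
  ultimately show "Eop u x y =
      (if agree_outside J x y then Eop u (zero_outside J x) (zero_outside J y) else 0)"
    unfolding Eop_apply by auto
qed

section \<open>Symplectic vectors and codes\<close>

type_synonym ('n, 'a) svec = "('n \<Rightarrow> 'a) \<times> ('n \<Rightarrow> 'a)"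

definition vecs_on :: "'n set \<Rightarrow> ('n, 'a::zero) svec set" where
  "vecs_on S = {v. \<forall>j. j \<notin> S \<longrightarrow> fst v j = 0 \<and> snd v j = 0}"

definition restrict_svec :: "'n set \<Rightarrow> ('n, 'a::zero) svec \<Rightarrow> ('n, 'a) svec" where
  "restrict_svec S v = (zero_outside S (fst v), zero_outside S (snd v))"

definition svec_scale :: "'a::times \<Rightarrow> ('n, 'a) svec \<Rightarrow> ('n, 'a) svec" where
  "svec_scale c v = (\<lambda>j. c * fst v j, \<lambda>j. c * snd v j)"

lemma Fq_linear_zero: "Fq_linear W \<Longrightarrow> 0 \<in> W"
  unfolding Fq_linear_def zero_prod_def zero_fun_def by blast

lemma Fq_linear_add: "Fq_linear W \<Longrightarrow> u \<in> W \<Longrightarrow> w \<in> W \<Longrightarrow> u + w \<in> W"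
  unfolding Fq_linear_def plus_prod_def plus_fun_def by blast

lemma Fq_linear_scale: "Fq_linear W \<Longrightarrow> u \<in> W \<Longrightarrow> svec_scale c u \<in> W"
  unfolding Fq_linear_def svec_scale_def by blast

lemma Fq_linear_uminus: "Fq_linear W \<Longrightarrow> u \<in> W \<Longrightarrow> - u \<in> W"
  using Fq_linear_scale[of W u "- 1"] by (simp add: svec_scale_def uminus_prod_def fun_Compl_def)

lemma Fq_linear_imp_add_subgroup: "Fq_linear W \<Longrightarrow> add_subgroup W"
  unfolding add_subgroup_def using Fq_linear_zero Fq_linear_add Fq_linear_uminus by blast

lemma Fq_linear_Int: "Fq_linear V \<Longrightarrow> Fq_linear W \<Longrightarrow> Fq_linear (V \<inter> W)"
  unfolding Fq_linear_def by blast

lemma Fq_linear_vecs_on: "Fq_linear (vecs_on S :: ('n, 'a::field) svec set)"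
  unfolding Fq_linear_def vecs_on_def by auto

lemma Fq_linearI:
  assumes "0 \<in> W" "\<And>u w. u \<in> W \<Longrightarrow> w \<in> W \<Longrightarrow> u + w \<in> W"
    "\<And>c u. u \<in> W \<Longrightarrow> svec_scale c u \<in> W"
  shows "Fq_linear W"
  using assms unfolding Fq_linear_def zero_prod_def zero_fun_def plus_prod_def plus_fun_def
    svec_scale_def by blast

lemma Fq_linear_image_restrict_svec:
  assumes C: "Fq_linear (C :: ('n, 'a::field) svec set)"
  shows "Fq_linear (restrict_svec S ` C)"
proof (rule Fq_linearI)
  have "restrict_svec S 0 = 0"
    by (simp add: restrict_svec_def zero_outside_def zero_prod_def fun_eq_iff)
  then show "0 \<in> restrict_svec S ` C" using Fq_linear_zero[OF C] by (metis image_eqI)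
next
  fix u w assume "u \<in> restrict_svec S ` C" "w \<in> restrict_svec S ` C"
  then obtain a b where ab: "a \<in> C" "b \<in> C" "u = restrict_svec S a" "w = restrict_svec S b"
    by blast
  have "u + w = restrict_svec S (a + b)"
    unfolding ab by (simp add: restrict_svec_def zero_outside_def fun_eq_iff)
  then show "u + w \<in> restrict_svec S ` C" using Fq_linear_add[OF C ab(1,2)] by blast
next
  fix c u assume "u \<in> restrict_svec S ` C"
  then obtain a where a: "a \<in> C" "u = restrict_svec S a" by blast
  have "svec_scale c u = restrict_svec S (svec_scale c a)"
    unfolding a by (simp add: restrict_svec_def svec_scale_def zero_outside_def fun_eq_iff)
  then show "svec_scale c u \<in> restrict_svec S ` C" using Fq_linear_scale[OF C a(1)] by blast
qed

lemma restrict_svec_in_vecs_on: "restrict_svec S v \<in> vecs_on S"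
  unfolding restrict_svec_def vecs_on_def zero_outside_def by auto

lemma symp_eq_dot: "symp u w = dot (fst u) (snd w) - dot (snd u) (fst w)"
  unfolding symp_def dot_def ..

lemma symp_add_left: "symp (u + w) x = symp u x + symp w x"
  unfolding symp_eq_dot by (simp add: dot_add_left)

lemma symp_add_right: "symp x (u + w) = symp x u + symp x w"
  unfolding symp_eq_dot by (simp add: dot_add_right)

lemma symp_scale_left: "symp (svec_scale c u) x = c * symp u x"
  unfolding symp_def svec_scale_def by (simp add: sum_distrib_left right_diff_distrib mult.assoc)

lemma symp_scale_right: "symp x (svec_scale c u) = c * symp x u"
  unfolding symp_def svec_scale_def by (simp add: sum_distrib_left right_diff_distrib mult_ac)

lemma symp_uminus_left: "symp (- u) x = - symp u x"
  unfolding symp_eq_dot by (simp add: dot_uminus_left)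

lemma symp_uminus_right: "symp x (- u) = - symp x u"
  unfolding symp_eq_dot by (simp add: dot_uminus_right)

lemma symp_diff_left: "symp (u - w) x = symp u x - symp w x"
  using symp_add_left[of u "- w" x] by (simp add: symp_uminus_left)

lemma symp_diff_right: "symp x (u - w) = symp x u - symp x w"
  using symp_add_right[of x u "- w"] by (simp add: symp_uminus_right)

lemma symp_zero_right [simp]: "symp u 0 = 0"
  unfolding symp_def by simp

lemma symp_zero_left [simp]: "symp 0 u = 0"
  unfolding symp_def by simp

lemma symp_antisym: "symp u w = - symp w u"
  unfolding symp_def by (simp add: mult.commute)

lemma symp_restrict_svec: "x \<in> vecs_on S \<Longrightarrow> symp (restrict_svec S c) x = symp c x"
  unfolding symp_def restrict_svec_def vecs_on_def zero_outside_def
  by (intro arg_cong2[where f = minus] sum.cong) auto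

lemma symp_nondegenerate_vecs_on:
  fixes w :: "('n::finite, 'a::field) svec"
  assumes w: "w \<in> vecs_on S" and orth: "\<forall>x\<in>vecs_on S. symp w x = 0"
  shows "w = 0"
proof -
  have "fst w j = 0 \<and> snd w j = 0" for j
  proof (cases "j \<in> S")
    case True
    define d :: "'n \<Rightarrow> 'a" where "d = (\<lambda>i. if i = j then 1 else 0)"
    have "(0, d) \<in> vecs_on S" "(d, 0) \<in> vecs_on S" using True by (auto simp: vecs_on_def d_def)
    moreover have "symp w (0, d) = fst w j" "symp w (d, 0) = - snd w j"
      unfolding symp_def d_def by (simp_all add: if_distrib[of "\<lambda>r. c * r" for c] cong: if_cong)
    ultimately show ?thesis using orth by force
  qed (use w in \<open>auto simp: vecs_on_def\<close>)
  then show ?thesis by (simp add: prod_eq_iff fun_eq_iff)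
qed

lemma card_vecs_on:
  "card (vecs_on S :: ('n::finite, 'a::{finite,zero}) svec set) = CARD('a) ^ (2 * card S)"
proof -
  let ?F = "{f :: 'n \<Rightarrow> 'a. \<forall>j. j \<notin> S \<longrightarrow> f j = 0}"
  have "bij_betw (\<lambda>f. restrict f S) ?F (PiE S (\<lambda>_. UNIV))"
    by (rule bij_betw_byWitness[where f' = "\<lambda>g j. if j \<in> S then g j else 0"])
       (auto simp: fun_eq_iff PiE_def extensional_def)
  then have "card ?F = CARD('a) ^ card S" by (simp add: bij_betw_same_card card_PiE)
  moreover have "vecs_on S = ?F \<times> ?F" unfolding vecs_on_def by auto
  ultimately show ?thesis by (simp add: card_cartesian_product power_mult_distrib mult_2 power_add)
qed

lemma swt_vec_le_card: "x \<in> vecs_on S \<Longrightarrow> swt_vec x \<le> card S"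
  unfolding swt_vec_def vecs_on_def by (intro card_mono) auto

lemma swt_le_swt_vec:
  assumes "x \<in> D" "x \<noteq> 0"
  shows "swt D \<le> swt_vec (x :: ('n::finite, 'a::zero) svec)"
proof -
  have "finite {swt_vec v |v. v \<in> D \<and> v \<noteq> (\<lambda>_. 0, \<lambda>_. 0)}"
    by (rule finite_subset[of _ "{..CARD('n)}"]) (auto simp: swt_vec_def card_mono)
  then show ?thesis
    unfolding swt_def using assms unfolding zero_prod_def zero_fun_def by (intro Min_le) blast+
qed

lemma sum_add_subgroup_translate:
  "add_subgroup W \<Longrightarrow> c \<in> W \<Longrightarrow> (\<Sum>w\<in>W. h (c + w)) = (\<Sum>w\<in>W. h w)"
  by (rule sum.reindex_bij_witness[of _ "\<lambda>w. w - c" "\<lambda>w. c + w"])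
     (auto simp: add_subgroup_def add_subgroup_diff)

lemma sum_add_subgroup_uminus: "add_subgroup W \<Longrightarrow> (\<Sum>w\<in>W. h (- w)) = (\<Sum>w\<in>W. h w)"
  by (rule sum.reindex_bij_witness[of _ uminus uminus]) (auto simp: add_subgroup_def)

lemma sum_char_add_subgroup_eq_0:
  fixes \<psi> :: "'v::ab_group_add \<Rightarrow> 'c::idom"
  assumes W: "add_subgroup W"
    and hom: "\<And>u w. u \<in> W \<Longrightarrow> w \<in> W \<Longrightarrow> \<psi> (u + w) = \<psi> u * \<psi> w"
    and nontriv: "w0 \<in> W" "\<psi> w0 \<noteq> 1"
  shows "(\<Sum>w\<in>W. \<psi> w) = 0"
proof -
  have "(\<Sum>w\<in>W. \<psi> w) = (\<Sum>w\<in>W. \<psi> (w0 + w))"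
    by (rule sum_add_subgroup_translate[OF W nontriv(1), symmetric])
  also have "\<dots> = \<psi> w0 * (\<Sum>w\<in>W. \<psi> w)"
    unfolding sum_distrib_left by (rule sum.cong) (simp_all add: hom nontriv(1))
  finally have "(1 - \<psi> w0) * (\<Sum>w\<in>W. \<psi> w) = 0" by (simp add: algebra_simps)
  with nontriv show ?thesis by simp
qed

lemma sum_add_char_linear:
  fixes W :: "('n::finite, 'a::{finite,field}) svec set" and L :: "('n, 'a) svec \<Rightarrow> 'a"
  assumes W: "Fq_linear W"
    and L_add: "\<And>u w. u \<in> W \<Longrightarrow> w \<in> W \<Longrightarrow> L (u + w) = L u + L w"
    and L_scale: "\<And>c u. u \<in> W \<Longrightarrow> L (svec_scale c u) = c * L u"
  shows "(\<Sum>w\<in>W. add_char (L w)) = (if \<forall>w\<in>W. L w = 0 then of_nat (card W) else 0)"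
proof (cases "\<forall>w\<in>W. L w = 0")
  case False
  then obtain w where w: "w \<in> W" "L w \<noteq> 0" by blast
  obtain t :: 'a where t: "add_char t \<noteq> 1" using add_char_nontrivial by blast
  define w0 where "w0 = svec_scale (t / L w) w"
  have "w0 \<in> W" "add_char (L w0) \<noteq> 1"
    using w t by (simp_all add: w0_def Fq_linear_scale[OF W] L_scale)
  then have "(\<Sum>w\<in>W. add_char (L w)) = 0"
    by (intro sum_char_add_subgroup_eq_0[OF Fq_linear_imp_add_subgroup[OF W]])
      (simp_all add: L_add add_char_add)
  with False show ?thesis by auto
qed simp

lemma sum_add_char_symp_left:
  "Fq_linear W \<Longrightarrow>
    (\<Sum>w\<in>W. add_char (symp w x)) = (if \<forall>w\<in>W. symp w x = 0 then of_nat (card W) else 0)"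
  by (rule sum_add_char_linear) (simp_all add: symp_add_left symp_scale_left)

lemma sum_add_char_symp_right:
  "Fq_linear W \<Longrightarrow>
    (\<Sum>x\<in>W. add_char (symp w x)) = (if \<forall>x\<in>W. symp w x = 0 then of_nat (card W) else 0)"
  by (rule sum_add_char_linear) (simp_all add: symp_add_right symp_scale_right)

lemma vecs_on_mono: "S \<subseteq> T \<Longrightarrow> vecs_on S \<subseteq> vecs_on T"
  unfolding vecs_on_def by auto

text \<open>Instead of counting dimensions, evaluate
  \<open>\<Sum>x\<in>vecs_on A. \<Sum>w\<in>W. add_char (symp w x)\<close> in both orders: this gives
  \<open>card W = card (vecs_on A)\<close>.\<close>
lemma Fq_linear_eq_vecs_on:
  fixes W :: "('n::finite, 'a::{finite,field}) svec set"
  assumes W: "Fq_linear W" "W \<subseteq> vecs_on A"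
    and complement: "\<And>x. x \<in> vecs_on A \<Longrightarrow> \<forall>w\<in>W. symp w x = 0 \<Longrightarrow> x = 0"
  shows "W = vecs_on A"
proof -
  let ?V = "vecs_on A :: ('n, 'a) svec set"
  have "0 \<in> ?V" "0 \<in> W" using Fq_linear_zero[OF W(1)] by (auto simp: vecs_on_def)
  have "(\<Sum>w\<in>W. add_char (symp w x)) = (if x = 0 then of_nat (card W) else 0)" if "x \<in> ?V" for x
    using complement[OF that] by (auto simp: sum_add_char_symp_left[OF W(1)])
  then have by_x: "(\<Sum>x\<in>?V. \<Sum>w\<in>W. add_char (symp w x)) = of_nat (card W)"
    using \<open>0 \<in> ?V\<close> by (simp cong: sum.cong)
  have "(\<Sum>x\<in>?V. add_char (symp w x)) = (if w = 0 then of_nat (card ?V) else 0)"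
    if "w \<in> W" for w
    using symp_nondegenerate_vecs_on[of w A] that W(2)
    by (auto simp: sum_add_char_symp_right[OF Fq_linear_vecs_on])
  then have by_w: "(\<Sum>w\<in>W. \<Sum>x\<in>?V. add_char (symp w x)) = of_nat (card ?V)"
    using \<open>0 \<in> W\<close> by (simp cong: sum.cong)
  have "(of_nat (card W) :: complex) = of_nat (card ?V)"
    unfolding by_x[symmetric] by_w[symmetric] by (rule sum.swap)
  then have "card W = card ?V" by (simp only: of_nat_eq_iff)
  with W(2) show ?thesis by (intro card_subset_eq) auto
qed

lemma image_restrict_svec_eq_vecs_on:
  fixes C :: "('n::finite, 'a::{finite,field}) svec set"
  assumes C: "Fq_linear C" and short: "card A < swt (symp_dual C)"
  shows "restrict_svec A ` C = vecs_on A"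
proof (rule Fq_linear_eq_vecs_on)
  show "Fq_linear (restrict_svec A ` C)" by (rule Fq_linear_image_restrict_svec[OF C])
  show "restrict_svec A ` C \<subseteq> vecs_on A" using restrict_svec_in_vecs_on by blast
next
  fix x assume x: "x \<in> vecs_on A" "\<forall>w\<in>restrict_svec A ` C. symp w x = 0"
  then have "x \<in> symp_dual C" by (auto simp: symp_dual_def symp_restrict_svec)
  show "x = 0"
  proof (rule ccontr)
    assume "x \<noteq> 0"
    with \<open>x \<in> symp_dual C\<close> have "swt (symp_dual C) \<le> swt_vec x" by (rule swt_le_swt_vec)
    also have "\<dots> \<le> card A" using x(1) by (rule swt_vec_le_card)
    finally show False using short by simp
  qed
qed

text \<open>Pick \<open>h\<close> on \<open>I\<close> with \<open>symp g h \<noteq> 0\<close> and a codeword \<open>c\<close> restricting to \<open>h\<close> on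
  \<open>A = I \<union> - J\<close>: then \<open>c\<close> vanishes outside \<open>J\<close> and pairs with \<open>g\<close> as \<open>h\<close> does.\<close>
lemma exists_codeword_on_detecting:
  fixes C :: "('n::finite, 'a::{finite,field}) svec set"
  assumes C: "Fq_linear C" and IJ: "I \<subseteq> J" and short: "card (I \<union> - J) < swt (symp_dual C)"
    and g: "g \<in> vecs_on I" "g \<noteq> 0"
  shows "\<exists>c\<in>C \<inter> vecs_on J. symp c g \<noteq> 0"
proof -
  let ?A = "I \<union> - J"
  obtain h where h: "h \<in> vecs_on I" "symp g h \<noteq> 0"
    using symp_nondegenerate_vecs_on g by blast
  then have "h \<in> vecs_on ?A" using vecs_on_mono[of I ?A] by blast
  then obtain c where c: "c \<in> C" "h = restrict_svec ?A c"
    using image_restrict_svec_eq_vecs_on[OF C short] by blast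
  have "c \<in> vecs_on J"
    unfolding vecs_on_def
  proof (intro CollectI allI impI)
    fix j assume "j \<notin> J"
    then have "j \<in> ?A" "j \<notin> I" using IJ by auto
    then show "fst c j = 0 \<and> snd c j = 0"
      using h(1) unfolding c(2) vecs_on_def restrict_svec_def zero_outside_def
      by (auto dest: spec[of _ j])
  qed
  moreover have "symp c g = - symp g h"
    using symp_restrict_svec[of g ?A c] g(1) vecs_on_mono[of I ?A] c(2) symp_antisym[of h g]
    by auto
  ultimately show ?thesis using c(1) h(2) by (intro bexI[of _ c]) auto
qed

section \<open>Recovery of the stabilizer code\<close>

locale nonzero_stab_code =
  fixes C :: "('n::finite, 'a::{finite,field}) svec set"
    and lam :: "('n \<Rightarrow> 'a) mat \<Rightarrow> complex"
    and v0 :: "('n \<Rightarrow> 'a) \<Rightarrow> complex"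
  assumes linear: "Fq_linear C"
    and v0_in_code: "v0 \<in> stab_code C lam"
    and v0_nonzero: "v0 \<noteq> (\<lambda>_. 0)"
begin

lemma mvec_Eop_stab_code: "v \<in> stab_code C lam \<Longrightarrow> c \<in> C \<Longrightarrow> mvec (Eop c) v = (\<lambda>x. lam (Eop c) * v x)"
  unfolding stab_code_def using stab_group.gen by blast

lemma eigenvalue_unique: "(\<lambda>x. a * v0 x) = (\<lambda>x. b * v0 x) \<Longrightarrow> a = b"
  using v0_nonzero by (metis mult_right_cancel)

lemma norm_lam_Eop: "c \<in> C \<Longrightarrow> norm (lam (Eop c)) = 1"
proof -
  assume c: "c \<in> C"
  let ?S = "\<Sum>x\<in>UNIV. (norm (v0 x))\<^sup>2"
  have "(\<Sum>x\<in>UNIV. (norm (lam (Eop c) * v0 x))\<^sup>2) = ?S"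
    using sum_norm_mvec_Eop[of c v0] mvec_Eop_stab_code[OF v0_in_code c] by simp
  then have "(norm (lam (Eop c)))\<^sup>2 * ?S = 1 * ?S"
    by (simp add: norm_mult power_mult_distrib sum_distrib_left)
  moreover have "?S \<noteq> 0"
    using v0_nonzero by (subst sum_nonneg_eq_0_iff) auto
  ultimately have "(norm (lam (Eop c)))\<^sup>2 = 1" by simp
  then show ?thesis using norm_ge_zero[of "lam (Eop c)"] by (auto simp: power2_eq_1_iff)
qed

lemma lam_mid: "lam mid = 1"
  using mvec_Eop_stab_code[OF v0_in_code Fq_linear_zero[OF linear]]
  by (intro eigenvalue_unique) simp

lemma lam_Eop_add:
  assumes c: "c \<in> C" and c': "c' \<in> C"
  shows "lam (Eop c) * lam (Eop c') = add_char (dot (snd c) (fst c')) * lam (Eop (c + c'))"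
proof (rule eigenvalue_unique)
  have "mvec (mmult (Eop c) (Eop c')) v0 = (\<lambda>x. (lam (Eop c) * lam (Eop c')) * v0 x)"
    unfolding mvec_mmult mvec_Eop_stab_code[OF v0_in_code c'] mvec_scale
      mvec_Eop_stab_code[OF v0_in_code c] by (simp add: mult_ac)
  moreover have "mvec (mmult (Eop c) (Eop c')) v0
      = (\<lambda>x. (add_char (dot (snd c) (fst c')) * lam (Eop (c + c'))) * v0 x)"
    unfolding mmult_Eop mvec_msmult mvec_Eop_stab_code[OF v0_in_code Fq_linear_add[OF linear c c']]
    by (simp add: mult_ac)
  ultimately show "(\<lambda>x. (lam (Eop c) * lam (Eop c')) * v0 x)
      = (\<lambda>x. (add_char (dot (snd c) (fst c')) * lam (Eop (c + c'))) * v0 x)" by simp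
qed

text \<open>As \<open>norm (lam (Eop c)) = 1\<close>, this is \<open>E\<^sub>c\<close> divided by its eigenvalue on the code.\<close>
definition stab_op :: "('n, 'a) svec \<Rightarrow> ('n \<Rightarrow> 'a) mat" where
  "stab_op c = msmult (cnj (lam (Eop c))) (Eop c)"

lemma stab_op_mult:
  assumes c: "c \<in> C" and c': "c' \<in> C"
  shows "mmult (stab_op c) (stab_op c') = stab_op (c + c')"
proof -
  let ?w = "add_char (dot (snd c) (fst c'))"
  have "mmult (stab_op c) (stab_op c')
      = msmult (cnj (lam (Eop c) * lam (Eop c')) * ?w) (Eop (c + c'))"
    unfolding stab_op_def mmult_msmult_left mmult_msmult_right mmult_Eop msmult_msmult
    by (simp add: mult_ac)
  also have "cnj (lam (Eop c) * lam (Eop c')) * ?w = cnj (lam (Eop (c + c')))"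
    unfolding lam_Eop_add[OF c c'] using cnj_add_char_mult[of "dot (snd c) (fst c')"]
    by (simp add: mult_ac)
  finally show ?thesis unfolding stab_op_def .
qed

lemma cnj_lam_Eop_mult: "c \<in> C \<Longrightarrow> cnj (lam (Eop c)) * lam (Eop c) = 1"
  using complex_norm_square[of "lam (Eop c)"] norm_lam_Eop[of c] by (simp add: mult.commute)

lemma madj_stab_op:
  assumes c: "c \<in> C"
  shows "madj (stab_op c) = stab_op (- c)"
proof -
  let ?d = "dot (snd c) (fst c)"
  have "lam (Eop c) * lam (Eop (- c)) = cnj (add_char ?d)"
    using lam_Eop_add[OF c Fq_linear_uminus[OF linear c]]
    by (simp add: lam_mid dot_uminus_right add_char_uminus)
  then have "lam (Eop (- c)) = cnj (lam (Eop c)) * cnj (add_char ?d)"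
    using cnj_lam_Eop_mult[OF c] by (metis mult.assoc mult_1)
  then show ?thesis
    unfolding stab_op_def madj_msmult madj_Eop msmult_msmult by simp
qed

lemma mvec_stab_op: "v \<in> stab_code C lam \<Longrightarrow> c \<in> C \<Longrightarrow> mvec (stab_op c) v = v"
  unfolding stab_op_def mvec_msmult
  by (simp add: mvec_Eop_stab_code cnj_lam_Eop_mult mult.assoc[symmetric])

lemma stab_op_Eop_commute:
  "mmult (stab_op c) (Eop e) = msmult (add_char (- symp c e)) (mmult (Eop e) (stab_op c))"
proof -
  have "add_char (- symp c e) * add_char (dot (snd e) (fst c)) = add_char (dot (snd c) (fst e))"
    unfolding symp_eq_dot by (simp add: dot_commute[of "snd e"] flip: add_char_add)
  then show ?thesis
    unfolding stab_op_def mmult_msmult_left mmult_msmult_right mmult_Eop msmult_msmult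
    by (simp add: add.commute mult_ac)
qed

lemma acts_only_on_stab_op: "c \<in> vecs_on J \<Longrightarrow> acts_only_on J (stab_op c)"
  unfolding stab_op_def vecs_on_def by (intro acts_only_on_msmult acts_only_on_Eop) simp

end

lemma conj_Gamma_on_proj:
  "mmult (mmult K (Gamma_on I (proj v))) (madj K) = msmult (1 / of_nat (CARD('a) ^ (2 * card I)))
     (\<lambda>x y. \<Sum>e\<in>vecs_on I. proj (mvec K (mvec (Eop e) v)) x y)"
  for K :: "('n::finite \<Rightarrow> 'a::{finite,field}) mat"
  unfolding Gamma_on_def mmult_msmult_left mmult_msmult_right mmult_sum_left mmult_sum_right
  by (simp add: mmult_assoc proj_mvec vecs_on_def flip: mmult_assoc)

locale recovery_setup = nonzero_stab_code C lam v0
  for C :: "('n::finite, 'a::{finite,field}) svec set" and lam v0 +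
  fixes I J :: "'n set"
  assumes I_subset_J: "I \<subseteq> J"
    and detects: "\<And>g. g \<in> vecs_on I \<Longrightarrow> g \<noteq> 0 \<Longrightarrow> \<exists>c\<in>C \<inter> vecs_on J. symp c g \<noteq> 0"
begin

abbreviation CJ :: "('n, 'a) svec set" where
  "CJ \<equiv> C \<inter> vecs_on J"

lemma Fq_linear_CJ: "Fq_linear CJ"
  by (rule Fq_linear_Int[OF linear Fq_linear_vecs_on])

lemma add_subgroup_CJ: "add_subgroup CJ"
  by (rule Fq_linear_imp_add_subgroup[OF Fq_linear_CJ])

lemma card_CJ_pos: "0 < card CJ"
  using Fq_linear_zero[OF Fq_linear_CJ] by (auto simp: card_gt_0_iff)

lemma sum_add_char_symp_CJ:
  "g \<in> vecs_on I \<Longrightarrow> (\<Sum>c\<in>CJ. add_char (symp c g)) = (if g = 0 then of_nat (card CJ) else 0)"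
  using detects[of g] by (auto simp: sum_add_char_symp_left[OF Fq_linear_CJ])

definition stab_comb :: "(('n, 'a) svec \<Rightarrow> complex) \<Rightarrow> ('n \<Rightarrow> 'a) mat" where
  "stab_comb \<alpha> = (\<lambda>x y. \<Sum>c\<in>CJ. \<alpha> c * stab_op c x y)"

lemma stab_comb_eq_sum_msmult: "stab_comb \<alpha> = (\<lambda>x y. \<Sum>c\<in>CJ. msmult (\<alpha> c) (stab_op c) x y)"
  unfolding stab_comb_def msmult_def ..

lemma acts_only_on_stab_comb: "acts_only_on J (stab_comb \<alpha>)"
  unfolding stab_comb_eq_sum_msmult
  by (intro acts_only_on_sum acts_only_on_msmult acts_only_on_stab_op) simp

lemma mmult_stab_comb:
  "mmult (stab_comb \<alpha>) (stab_comb \<beta>) = stab_comb (\<lambda>d. \<Sum>c\<in>CJ. \<alpha> c * \<beta> (d - c))"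
proof (intro ext)
  fix x y
  have "mmult (stab_comb \<alpha>) (stab_comb \<beta>) x y
      = (\<Sum>c\<in>CJ. \<Sum>c'\<in>CJ. \<alpha> c * \<beta> c' * mmult (stab_op c) (stab_op c') x y)"
    unfolding stab_comb_eq_sum_msmult mmult_sum_left mmult_sum_right mmult_msmult_left
      mmult_msmult_right
    by (simp add: msmult_def sum_distrib_left mult_ac)
  also have "\<dots> = (\<Sum>c\<in>CJ. \<Sum>c'\<in>CJ. \<alpha> c * \<beta> c' * stab_op (c + c') x y)"
    by (intro sum.cong refl) (auto simp: stab_op_mult)
  also have "\<dots> = (\<Sum>c\<in>CJ. \<Sum>d\<in>CJ. \<alpha> c * \<beta> (d - c) * stab_op d x y)"
  proof (rule sum.cong[OF refl])
    fix c assume "c \<in> CJ"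
    show "(\<Sum>c'\<in>CJ. \<alpha> c * \<beta> c' * stab_op (c + c') x y)
        = (\<Sum>d\<in>CJ. \<alpha> c * \<beta> (d - c) * stab_op d x y)"
      using sum_add_subgroup_translate[OF add_subgroup_CJ \<open>c \<in> CJ\<close>,
          of "\<lambda>d. \<alpha> c * \<beta> (d - c) * stab_op d x y"]
      by simp
  qed
  also have "\<dots> = stab_comb (\<lambda>d. \<Sum>c\<in>CJ. \<alpha> c * \<beta> (d - c)) x y"
    unfolding stab_comb_def by (subst sum.swap) (simp add: sum_distrib_right)
  finally show "mmult (stab_comb \<alpha>) (stab_comb \<beta>) x y
      = stab_comb (\<lambda>d. \<Sum>c\<in>CJ. \<alpha> c * \<beta> (d - c)) x y" .
qed

lemma madj_stab_comb: "madj (stab_comb \<alpha>) = stab_comb (\<lambda>c. cnj (\<alpha> (- c)))"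
proof (intro ext)
  fix x y
  have "cnj (stab_op c y x) = stab_op (- c) x y" if "c \<in> CJ" for c
    using fun_cong[OF fun_cong[OF madj_stab_op[of c]], of x y] that unfolding madj_def by simp
  then have "madj (stab_comb \<alpha>) x y = (\<Sum>c\<in>CJ. cnj (\<alpha> c) * stab_op (- c) x y)"
    unfolding stab_comb_def madj_def by (auto intro!: sum.cong)
  also have "\<dots> = stab_comb (\<lambda>c. cnj (\<alpha> (- c))) x y"
    unfolding stab_comb_def
    using sum_add_subgroup_uminus[OF add_subgroup_CJ, of "\<lambda>c. cnj (\<alpha> (- c)) * stab_op c x y"]
    by simp
  finally show "madj (stab_comb \<alpha>) x y = stab_comb (\<lambda>c. cnj (\<alpha> (- c))) x y" .
qed

lemma mvec_stab_comb_Eop: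
  assumes v: "v \<in> stab_code C lam"
  shows "mvec (stab_comb \<alpha>) (mvec (Eop e) v)
    = (\<lambda>x. (\<Sum>c\<in>CJ. \<alpha> c * add_char (- symp c e)) * mvec (Eop e) v x)"
proof -
  have "mvec (stab_op c) (mvec (Eop e) v) = (\<lambda>x. add_char (- symp c e) * mvec (Eop e) v x)"
    if "c \<in> CJ" for c
    using that unfolding mvec_mmult[symmetric] stab_op_Eop_commute mvec_msmult
    by (simp add: mvec_mmult mvec_stab_op[OF v])
  then show ?thesis
    unfolding stab_comb_eq_sum_msmult mvec_sum mvec_msmult
    by (intro ext) (auto simp: sum_distrib_right mult.assoc intro!: sum.cong)
qed

definition syndrome_proj :: "('n, 'a) svec \<Rightarrow> ('n \<Rightarrow> 'a) mat" where
  "syndrome_proj f = stab_comb (\<lambda>c. add_char (symp c f) / of_nat (card CJ))"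

lemma acts_only_on_syndrome_proj: "acts_only_on J (syndrome_proj f)"
  unfolding syndrome_proj_def by (rule acts_only_on_stab_comb)

lemma sum_add_char_symp_CJ_diff:
  assumes "f \<in> vecs_on I" "g \<in> vecs_on I"
  shows "(\<Sum>c\<in>CJ. add_char (symp c f) * cnj (add_char (symp c g)))
    = (if f = g then of_nat (card CJ) else 0)"
proof -
  have "f - g \<in> vecs_on I"
    using assms add_subgroup_diff[OF Fq_linear_imp_add_subgroup[OF Fq_linear_vecs_on]] by blast
  from sum_add_char_symp_CJ[OF this] show ?thesis by (simp add: symp_diff_right add_char_diff)
qed

lemma mvec_syndrome_proj_Eop:
  assumes v: "v \<in> stab_code C lam" and e: "e \<in> vecs_on I" and f: "f \<in> vecs_on I"
  shows "mvec (syndrome_proj f) (mvec (Eop e) v) = (if f = e then mvec (Eop e) v else (\<lambda>_. 0))"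
proof -
  have "(\<Sum>c\<in>CJ. add_char (symp c f) / of_nat (card CJ) * add_char (- symp c e))
      = (\<Sum>c\<in>CJ. add_char (symp c f) * cnj (add_char (symp c e))) / of_nat (card CJ)"
    by (simp add: add_char_uminus sum_divide_distrib)
  also have "\<dots> = (if f = e then 1 else 0)"
    using sum_add_char_symp_CJ_diff[OF f e] card_CJ_pos by (simp add: card_gt_0_iff)
  finally have "(\<Sum>c\<in>CJ. add_char (symp c f) / of_nat (card CJ) * add_char (- symp c e))
      = (if f = e then 1 else 0)" .
  then show ?thesis
    unfolding syndrome_proj_def mvec_stab_comb_Eop[OF v] by auto
qed

lemma madj_syndrome_proj: "madj (syndrome_proj f) = syndrome_proj f"
  unfolding syndrome_proj_def madj_stab_comb by (simp add: symp_uminus_left add_char_uminus)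

lemma syndrome_proj_mult:
  assumes f: "f \<in> vecs_on I" and g: "g \<in> vecs_on I"
  shows "mmult (syndrome_proj f) (syndrome_proj g) = (if f = g then syndrome_proj f else 0)"
proof -
  let ?N = "of_nat (card CJ) :: complex"
  have "(\<Sum>c\<in>CJ. add_char (symp c f) / ?N * (add_char (symp (d - c) g) / ?N))
      = (if f = g then add_char (symp d f) / ?N else 0)" for d
  proof -
    have "(\<Sum>c\<in>CJ. add_char (symp c f) / ?N * (add_char (symp (d - c) g) / ?N))
        = add_char (symp d g) / ?N\<^sup>2 * (\<Sum>c\<in>CJ. add_char (symp c f) * cnj (add_char (symp c g)))"
      by (simp add: symp_diff_left add_char_diff sum_distrib_left sum_divide_distrib
          power2_eq_square mult_ac)
    then show ?thesis
      unfolding sum_add_char_symp_CJ_diff[OF f g] using card_CJ_pos by (simp add: power2_eq_square)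
  qed
  moreover have "stab_comb (\<lambda>_. 0) = 0"
    unfolding stab_comb_def by (simp add: fun_eq_iff)
  ultimately show ?thesis
    unfolding syndrome_proj_def mmult_stab_comb by (simp cong: if_cong)
qed

definition syndrome_projs_sum :: "('n \<Rightarrow> 'a) mat" where
  "syndrome_projs_sum = (\<lambda>x y. \<Sum>f\<in>vecs_on I. syndrome_proj f x y)"

lemma syndrome_projs_sum_idem: "mmult syndrome_projs_sum syndrome_projs_sum = syndrome_projs_sum"
proof -
  have "mmult syndrome_projs_sum syndrome_projs_sum
      = (\<lambda>x y. \<Sum>f\<in>vecs_on I. \<Sum>g\<in>vecs_on I. mmult (syndrome_proj f) (syndrome_proj g) x y)"
    unfolding syndrome_projs_sum_def mmult_sum_left mmult_sum_right ..
  also have "\<dots> = syndrome_projs_sum"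
  proof (intro ext)
    fix x y
    have "(\<Sum>g\<in>vecs_on I. mmult (syndrome_proj f) (syndrome_proj g) x y) = syndrome_proj f x y"
      if "f \<in> vecs_on I" for f
      using that by (simp add: syndrome_proj_mult if_distrib[of "\<lambda>A. A x y"] cong: if_cong)
    then show "(\<Sum>f\<in>vecs_on I. \<Sum>g\<in>vecs_on I. mmult (syndrome_proj f) (syndrome_proj g) x y)
        = syndrome_projs_sum x y"
      unfolding syndrome_projs_sum_def by simp
  qed
  finally show ?thesis .
qed

lemma madj_syndrome_projs_sum: "madj syndrome_projs_sum = syndrome_projs_sum"
  unfolding syndrome_projs_sum_def using madj_syndrome_proj
  by (simp add: madj_def fun_eq_iff)

text \<open>The Kraus operators of the recovery: on the syndrome of the error \<open>E\<^sub>f\<close>, undo \<open>E\<^sub>f\<close>;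
  the complementary projection \<open>leftover\<close> completes them to a trace-preserving operation.\<close>
definition correction :: "('n, 'a) svec \<Rightarrow> ('n \<Rightarrow> 'a) mat" where
  "correction f = mmult (madj (Eop f)) (syndrome_proj f)"

definition leftover :: "('n \<Rightarrow> 'a) mat" where
  "leftover = mid - syndrome_projs_sum"

definition error_list :: "('n, 'a) svec list" where
  "error_list = (SOME fs. distinct fs \<and> set fs = vecs_on I)"

lemma distinct_error_list: "distinct error_list" and set_error_list: "set error_list = vecs_on I"
proof -
  obtain fs where "distinct fs \<and> set fs = (vecs_on I :: ('n, 'a) svec set)"
    using finite_distinct_list[of "vecs_on I :: ('n, 'a) svec set"] by auto
  then have "distinct error_list \<and> set error_list = vecs_on I"
    unfolding error_list_def by (rule someI[where P = "\<lambda>fs. distinct fs \<and> set fs = vecs_on I"])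
  then show "distinct error_list" "set error_list = vecs_on I" by simp_all
qed

definition kraus_ops :: "('n \<Rightarrow> 'a) mat list" where
  "kraus_ops = map correction error_list @ [leftover]"

lemma sum_list_kraus_ops:
  "(\<Sum>K\<leftarrow>kraus_ops. F K) = (\<Sum>f\<in>vecs_on I. F (correction f)) + F leftover"
  unfolding kraus_ops_def using distinct_error_list set_error_list
  by (simp add: sum_list_distinct_conv_sum_set comp_def)

lemma acts_only_on_kraus_ops: "K \<in> set kraus_ops \<Longrightarrow> acts_only_on J K"
proof -
  have "acts_only_on J (correction f)" if "f \<in> vecs_on I" for f
  proof -
    have "\<forall>j. j \<notin> J \<longrightarrow> fst f j = 0 \<and> snd f j = 0" using that I_subset_J by (auto simp: vecs_on_def)
    then show ?thesis
      unfolding correction_def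
      by (intro acts_only_on_mmult acts_only_on_madj acts_only_on_Eop acts_only_on_syndrome_proj)
  qed
  moreover have "acts_only_on J leftover"
    unfolding leftover_def syndrome_projs_sum_def
    by (intro acts_only_on_diff acts_only_on_mid acts_only_on_sum acts_only_on_syndrome_proj)
  moreover assume "K \<in> set kraus_ops"
  ultimately show ?thesis
    unfolding kraus_ops_def using set_error_list by auto
qed

lemma tp_operation_on_kraus_ops: "tp_operation_on J kraus_ops"
proof -
  have "mmult (madj (correction f)) (correction f) = syndrome_proj f" if "f \<in> vecs_on I" for f
  proof -
    have "mmult (madj (correction f)) (correction f)
        = mmult (syndrome_proj f) (mmult (mmult (Eop f) (madj (Eop f))) (syndrome_proj f))"
      unfolding correction_def madj_mmult madj_madj madj_syndrome_proj by (simp only: mmult_assoc)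
    then show ?thesis using syndrome_proj_mult[OF that that] by (simp add: mmult_Eop_madj_Eop)
  qed
  moreover have "mmult (madj leftover) leftover = leftover"
    unfolding leftover_def madj_diff madj_syndrome_projs_sum mmult_diff_left mmult_diff_right
    by (simp add: syndrome_projs_sum_idem)
  ultimately have "(\<lambda>x y. \<Sum>K\<leftarrow>kraus_ops. mmult (madj K) K x y) = mid"
    unfolding sum_list_kraus_ops by (simp add: leftover_def syndrome_projs_sum_def cong: sum.cong)
  then show ?thesis
    unfolding tp_operation_on_def using acts_only_on_kraus_ops by blast
qed

lemma mvec_correction_Eop:
  assumes v: "v \<in> stab_code C lam" and e: "e \<in> vecs_on I" and f: "f \<in> vecs_on I"
  shows "mvec (correction f) (mvec (Eop e) v) = (if f = e then v else (\<lambda>_. 0))"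
  unfolding correction_def mvec_mmult mvec_syndrome_proj_Eop[OF v e f]
  by (simp add: mmult_madj_Eop_Eop flip: mvec_mmult)

lemma mvec_leftover_Eop:
  assumes v: "v \<in> stab_code C lam" and e: "e \<in> vecs_on I"
  shows "mvec leftover (mvec (Eop e) v) = (\<lambda>_. 0)"
proof -
  have "mvec syndrome_projs_sum (mvec (Eop e) v) = mvec (Eop e) v"
    unfolding syndrome_projs_sum_def mvec_sum using e
    by (simp add: mvec_syndrome_proj_Eop[OF v e] if_distrib[of "\<lambda>w. w _"] cong: if_cong)
  then show ?thesis
    unfolding leftover_def mvec_diff by simp
qed

lemma kraus_apply_kraus_ops_Gamma_on:
  assumes v: "v \<in> stab_code C lam"
  shows "kraus_apply kraus_ops (Gamma_on I (proj v)) = proj v"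
proof -
  let ?c = "1 / of_nat (CARD('a) ^ (2 * card I)) :: complex"
  have "mmult (mmult (correction f) (Gamma_on I (proj v))) (madj (correction f))
      = msmult ?c (proj v)"
    if f: "f \<in> vecs_on I" for f
  proof -
    have "proj (mvec (correction f) (mvec (Eop e) v)) x y = (if f = e then proj v x y else 0)"
      if "e \<in> vecs_on I" for e x y
      using mvec_correction_Eop[OF v that f] by simp
    then show ?thesis unfolding conj_Gamma_on_proj using f by simp
  qed
  moreover have "mmult (mmult leftover (Gamma_on I (proj v))) (madj leftover) = 0"
    unfolding conj_Gamma_on_proj by (simp add: mvec_leftover_Eop[OF v] msmult_def fun_eq_iff)
  ultimately have "kraus_apply kraus_ops (Gamma_on I (proj v))
      = msmult (of_nat (card (vecs_on I :: ('n, 'a) svec set)) * ?c) (proj v)"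
    unfolding kraus_apply_def sum_list_kraus_ops by (simp add: msmult_def fun_eq_iff)
  then show ?thesis by (simp add: card_vecs_on)
qed

lemma stab_code_locally_recoverable: "locally_recoverable (stab_code C lam) I J"
  unfolding locally_recoverable_def
  using tp_operation_on_kraus_ops kraus_apply_kraus_ops_Gamma_on by blast

end

lemma locally_recoverable_trivial_code:
  fixes Q :: "(('n::finite \<Rightarrow> 'a::{finite,field}) \<Rightarrow> complex) set"
  assumes "\<forall>v\<in>Q. v = (\<lambda>_. 0)"
  shows "locally_recoverable Q I J"
  unfolding locally_recoverable_def
proof (intro exI conjI ballI)
  show "tp_operation_on J [mid]"
    unfolding tp_operation_on_def by (simp add: acts_only_on_mid)
  have Gamma_zero: "Gamma_on I (0 :: ('n \<Rightarrow> 'a) mat) = 0"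
    unfolding Gamma_on_def mmult_zero_left mmult_zero_right by (simp add: msmult_def fun_eq_iff)
  fix v assume "v \<in> Q"
  then have v_zero: "v = (\<lambda>_. 0)" using assms by blast
  show "kraus_apply [mid] (Gamma_on I (proj v)) = proj v"
    unfolding v_zero kraus_apply_def proj_zero Gamma_zero by (simp add: fun_eq_iff)
qed

theorem proposition20:
  fixes C :: "(('n::finite \<Rightarrow> 'a::{finite,field}) \<times> ('n \<Rightarrow> 'a)) set"
    and I J :: "'n set"
    and lam :: "('n \<Rightarrow> 'a) mat \<Rightarrow> complex"
  assumes "Fq_linear C"
    and "C \<subseteq> symp_dual C"
    and "stab_character C lam"
    and "I \<noteq> {}" and "I \<subset> J"
    and "int (card J) \<ge> int CARD('n) - int (swt (symp_dual C)) + int (card I) + 1"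
  shows "locally_recoverable (stab_code C lam) I J"
proof (cases "\<exists>v0\<in>stab_code C lam. v0 \<noteq> (\<lambda>_. 0)")
  case True
  then obtain v0 where v0: "v0 \<in> stab_code C lam" "v0 \<noteq> (\<lambda>_. 0)" by blast
  have "card (I \<union> - J) = card I + card (- J)"
    using \<open>I \<subset> J\<close> by (intro card_Un_disjoint) auto
  moreover have "card (- J) = CARD('n) - card J" and "card J \<le> CARD('n)"
    using card_Diff_subset[of J UNIV] card_mono[of UNIV J] by (simp_all add: Compl_eq_Diff_UNIV)
  ultimately have "card (I \<union> - J) < swt (symp_dual C)"
    using assms(6) by linarith
  then interpret recovery_setup C lam v0 I J
    using assms(1,5) v0 exists_codeword_on_detecting[OF assms(1)]
    by unfold_locales auto
  show ?thesis by (rule stab_code_locally_recoverable)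
next
  case False
  then show ?thesis by (intro locally_recoverable_trivial_code) blast
qed

end
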